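(* Let $X$ be a uniformly smooth Banach space, let $S\subset X$ be a nonempty bounded set, and let $a\in\operatorname{conv} S$. Then there exists a sequence $\{x_i\}_{i=1}^\infty\subset S$ such that, for every $k\in\mathbb{N}$, the vector $a_k=\frac1k\sum_{i=1}^k x_i$ satisfies $$\|a-a_k\|\le \frac{2e^2}{k\,\rho_X^{-1}(1/k)}\,\operatorname{diam} S .$$
   Context: The modulus of smoothness of a Banach space $X$ is $\rho_X(\tau)=\sup\{\tfrac12(\|x+\tau y\|+\|x-\tau y\|)-1 : \|x\|=\|y\|=1\}$ for $\tau\ge 0$. $X$ is uniformly smooth if $\rho_X(t)=o(t)$ as $t\to0$. The function $\rho_X$ is convex, strictly increasing and continuous on $[0,\infty)$, with $\rho_X(0)=0$, and it satisfies $\sqrt{1+\tau^2}-1\le\rho_X(\tau)$. Consequently it is a bijection of $[0,\infty)$ onto itself, and $\rho_X^{-1}$ denotes its inverse function. $\operatorname{conv} S$ is the convex hull of $S$, and $\operatorname{diam} S=\sup_{x,y\in S}\|x-y\|$. *)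

theory Defs
  imports "HOL-Analysis.Analysis"
begin

definition modulus_smoothness :: "'a::real_normed_vector itself \<Rightarrow> real \<Rightarrow> real" where
  "modulus_smoothness _ \<tau> =
     (SUP p \<in> {(x::'a, y::'a). norm x = 1 \<and> norm y = 1}.
        (norm (fst p + \<tau> *\<^sub>R snd p) + norm (fst p - \<tau> *\<^sub>R snd p)) / 2 - 1)"

definition modulus_smoothness_inv :: "'a::real_normed_vector itself \<Rightarrow> real \<Rightarrow> real" where
  "modulus_smoothness_inv X t = (THE s. 0 \<le> s \<and> modulus_smoothness X s = t)"

definition uniformly_smooth :: "'a::real_normed_vector itself \<Rightarrow> bool" where
  "uniformly_smooth X \<longleftrightarrow> ((\<lambda>t. modulus_smoothness X t / t) \<longlongrightarrow> 0) (at_right 0)"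

end

theory Submission
  imports Defs
begin

text \<open>Choose the points greedily, keeping track of the residual
  \<open>r\<^sub>m = (\<Sum>i=1..m. x\<^sub>i - a)\<close>. Since \<open>a\<close> is a convex combination of points of \<open>S\<close>,
  averaging the smoothness inequality
  \<open>\<parallel>r + v\<parallel> + \<parallel>r - v\<parallel> \<le> 2\<parallel>r\<parallel>(1 + \<rho>(\<parallel>v\<parallel>/\<parallel>r\<parallel>))\<close> over that combination yields
  \<open>s \<in> S\<close> with \<open>\<parallel>r + (s - a)\<parallel> \<le> \<parallel>r\<parallel>(1 + 2\<rho>(D/\<parallel>r\<parallel>))\<close>, where \<open>D = diam S\<close>.
  With \<open>\<tau> = \<rho>\<^sup>-\<^sup>1(1/k)\<close> the residual thus grows at most by the factor \<open>1 + 2/k\<close>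
  once it exceeds \<open>D/\<tau>\<close>, and at most by \<open>D\<close> otherwise; as \<open>(1 + 2/k)\<^sup>k \<le> e\<^sup>2\<close>,
  this gives \<open>\<parallel>r\<^sub>k\<parallel> \<le> 2e\<^sup>2D/\<tau>\<close>, and \<open>a - a\<^sub>k = -r\<^sub>k/k\<close>.\<close>

lemma modulus_smoothness_ge:
  fixes x y :: "'a::real_normed_vector"
  assumes "norm x = 1" "norm y = 1"
  shows "(norm (x + \<tau> *\<^sub>R y) + norm (x - \<tau> *\<^sub>R y)) / 2 - 1 \<le> modulus_smoothness TYPE('a) \<tau>"
proof -
  have bdd: "bdd_above ((\<lambda>p. (norm (fst p + \<tau> *\<^sub>R snd p) + norm (fst p - \<tau> *\<^sub>R snd p)) / 2 - 1)
          ` {(x::'a, y::'a). norm x = 1 \<and> norm y = 1})"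
  proof (rule bdd_aboveI2)
    fix p :: "'a \<times> 'a"
    assume "p \<in> {(x, y). norm x = 1 \<and> norm y = 1}"
    then have "norm (fst p) = 1" "norm (snd p) = 1" by auto
    then have "norm (fst p + \<tau> *\<^sub>R snd p) \<le> 1 + \<bar>\<tau>\<bar>" "norm (fst p - \<tau> *\<^sub>R snd p) \<le> 1 + \<bar>\<tau>\<bar>"
      using norm_triangle_ineq[of "fst p" "\<tau> *\<^sub>R snd p"] norm_triangle_ineq4[of "fst p" "\<tau> *\<^sub>R snd p"]
      by simp_all
    then show "(norm (fst p + \<tau> *\<^sub>R snd p) + norm (fst p - \<tau> *\<^sub>R snd p)) / 2 - 1 \<le> \<bar>\<tau>\<bar>"
      by argo
  qed
  then show ?thesis
    unfolding modulus_smoothness_def using cSUP_upper[OF _ bdd, of "(x, y)"] assms by simp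
qed

lemma modulus_smoothness_le:
  assumes "\<exists>u::'a::real_normed_vector. u \<noteq> 0"
    and "\<And>x y::'a. norm x = 1 \<Longrightarrow> norm y = 1 \<Longrightarrow>
           (norm (x + \<tau> *\<^sub>R y) + norm (x - \<tau> *\<^sub>R y)) / 2 - 1 \<le> M"
  shows "modulus_smoothness TYPE('a) \<tau> \<le> M"
  unfolding modulus_smoothness_def
proof (rule cSUP_least)
  obtain u :: 'a where "u \<noteq> 0" using assms(1) ..
  then show "{(x::'a, y::'a). norm x = 1 \<and> norm y = 1} \<noteq> {}"
    by (auto simp: norm_sgn intro!: exI[of _ "sgn u"])
next
  fix p :: "'a \<times> 'a"
  assume "p \<in> {(x, y). norm x = 1 \<and> norm y = 1}"
  then have "norm (fst p) = 1" "norm (snd p) = 1" by (simp_all add: mem_Times_iff)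
  then show "(norm (fst p + \<tau> *\<^sub>R snd p) + norm (fst p - \<tau> *\<^sub>R snd p)) / 2 - 1 \<le> M"
    by (rule assms(2))
qed

lemma norm_unit_add_sub_scaled_self:
  fixes u :: "'a::real_normed_vector"
  assumes "norm u = 1"
  shows "(norm (u + \<tau> *\<^sub>R u) + norm (u - \<tau> *\<^sub>R u)) / 2 - 1 = max \<bar>\<tau>\<bar> 1 - 1"
proof -
  have "u + \<tau> *\<^sub>R u = (1 + \<tau>) *\<^sub>R u" "u - \<tau> *\<^sub>R u = (1 - \<tau>) *\<^sub>R u"
    by (simp_all add: algebra_simps)
  moreover have "(\<bar>1 + \<tau>\<bar> + \<bar>1 - \<tau>\<bar>) / 2 = max \<bar>\<tau>\<bar> 1"
    by (simp add: max_def abs_if)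
  ultimately show ?thesis using assms by simp
qed

lemma modulus_smoothness_lower_bounds:
  assumes "\<exists>u::'a::real_normed_vector. u \<noteq> 0"
  shows modulus_smoothness_nonneg: "0 \<le> modulus_smoothness TYPE('a) \<tau>"
    and abs_minus_one_le_modulus_smoothness: "\<bar>\<tau>\<bar> - 1 \<le> modulus_smoothness TYPE('a) \<tau>"
proof -
  obtain u :: 'a where "u \<noteq> 0" using assms ..
  then have u: "norm (sgn u) = 1" by (simp add: norm_sgn)
  have "max \<bar>\<tau>\<bar> 1 - 1 \<le> modulus_smoothness TYPE('a) \<tau>"
    using modulus_smoothness_ge[OF u u, of \<tau>] unfolding norm_unit_add_sub_scaled_self[OF u] .
  then show "0 \<le> modulus_smoothness TYPE('a) \<tau>" "\<bar>\<tau>\<bar> - 1 \<le> modulus_smoothness TYPE('a) \<tau>"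
    by linarith+
qed

lemma modulus_smoothness_0:
  assumes "\<exists>u::'a::real_normed_vector. u \<noteq> 0"
  shows "modulus_smoothness TYPE('a) 0 = 0"
  using modulus_smoothness_le[OF assms, of 0 0] modulus_smoothness_nonneg[OF assms, of 0]
  by simp

lemma modulus_smoothness_le_scaled:
  assumes "\<exists>u::'a::real_normed_vector. u \<noteq> 0" and "0 \<le> s" "s \<le> t"
  shows "modulus_smoothness TYPE('a) s \<le> (s / t) * modulus_smoothness TYPE('a) t"
proof (rule modulus_smoothness_le[OF assms(1)])
  fix x y :: 'a assume x: "norm x = 1" and y: "norm y = 1"
  define \<mu> where "\<mu> = s / t"
  have \<mu>: "0 \<le> \<mu>" "\<mu> \<le> 1" using assms by (auto simp: \<mu>_def divide_le_eq_1)
  have "x + s *\<^sub>R y = \<mu> *\<^sub>R (x + t *\<^sub>R y) + (1 - \<mu>) *\<^sub>R x"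
    using assms by (auto simp: \<mu>_def algebra_simps)
  then have plus: "norm (x + s *\<^sub>R y) \<le> \<mu> * norm (x + t *\<^sub>R y) + (1 - \<mu>)"
    using norm_triangle_ineq[of "\<mu> *\<^sub>R (x + t *\<^sub>R y)" "(1 - \<mu>) *\<^sub>R x"] \<mu> x by simp
  have "x - s *\<^sub>R y = \<mu> *\<^sub>R (x - t *\<^sub>R y) + (1 - \<mu>) *\<^sub>R x"
    using assms by (auto simp: \<mu>_def algebra_simps)
  then have minus: "norm (x - s *\<^sub>R y) \<le> \<mu> * norm (x - t *\<^sub>R y) + (1 - \<mu>)"
    using norm_triangle_ineq[of "\<mu> *\<^sub>R (x - t *\<^sub>R y)" "(1 - \<mu>) *\<^sub>R x"] \<mu> x by simp
  have "(norm (x + s *\<^sub>R y) + norm (x - s *\<^sub>R y)) / 2 - 1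
      \<le> \<mu> * ((norm (x + t *\<^sub>R y) + norm (x - t *\<^sub>R y)) / 2 - 1)"
    using plus minus by (simp add: field_simps)
  also have "\<dots> \<le> \<mu> * modulus_smoothness TYPE('a) t"
    using modulus_smoothness_ge[OF x y] \<mu>(1) by (rule mult_left_mono)
  finally show "(norm (x + s *\<^sub>R y) + norm (x - s *\<^sub>R y)) / 2 - 1
      \<le> s / t * modulus_smoothness TYPE('a) t"
    by (simp add: \<mu>_def)
qed

lemma modulus_smoothness_mono:
  assumes "\<exists>u::'a::real_normed_vector. u \<noteq> 0" and "0 \<le> s" "s \<le> t"
  shows "modulus_smoothness TYPE('a) s \<le> modulus_smoothness TYPE('a) t"
proof -
  have "s / t \<le> 1"
    using assms by (cases "t = 0") (auto simp: divide_le_eq_1)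
  moreover have "0 \<le> s / t" using assms by simp
  ultimately have "(s / t) * modulus_smoothness TYPE('a) t \<le> modulus_smoothness TYPE('a) t"
    using modulus_smoothness_nonneg[OF assms(1)] by (intro mult_left_le_one_le)
  then show ?thesis
    using modulus_smoothness_le_scaled[OF assms] by linarith
qed

lemma modulus_smoothness_less:
  assumes "\<exists>u::'a::real_normed_vector. u \<noteq> 0" and "0 \<le> s" "s < t"
    and "0 < modulus_smoothness TYPE('a) t"
  shows "modulus_smoothness TYPE('a) s < modulus_smoothness TYPE('a) t"
proof -
  have "s / t < 1" using assms by simp
  then have "(s / t) * modulus_smoothness TYPE('a) t < modulus_smoothness TYPE('a) t"
    using mult_strict_right_mono[OF _ assms(4)] by fastforce
  then show ?thesis
    using modulus_smoothness_le_scaled[OF assms(1,2) less_imp_le[OF assms(3)]] by linarith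
qed

lemma modulus_smoothness_lipschitz:
  assumes "\<exists>u::'a::real_normed_vector. u \<noteq> 0"
  shows "1-lipschitz_on A (modulus_smoothness TYPE('a))"
proof (rule lipschitz_onI)
  have le: "modulus_smoothness TYPE('a) s \<le> modulus_smoothness TYPE('a) t + \<bar>s - t\<bar>" for s t
  proof (rule modulus_smoothness_le[OF assms])
    fix x y :: 'a assume x: "norm x = 1" and y: "norm y = 1"
    have plus: "x + s *\<^sub>R y = (x + t *\<^sub>R y) + (s - t) *\<^sub>R y"
      and minus: "x - s *\<^sub>R y = (x - t *\<^sub>R y) - (s - t) *\<^sub>R y"
      by (simp_all add: algebra_simps)
    have "norm ((s - t) *\<^sub>R y) = \<bar>s - t\<bar>" using y by simp
    then have "norm (x + s *\<^sub>R y) \<le> norm (x + t *\<^sub>R y) + \<bar>s - t\<bar>"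
      and "norm (x - s *\<^sub>R y) \<le> norm (x - t *\<^sub>R y) + \<bar>s - t\<bar>"
      by (metis plus norm_triangle_ineq, metis minus norm_triangle_ineq4)
    then show "(norm (x + s *\<^sub>R y) + norm (x - s *\<^sub>R y)) / 2 - 1
        \<le> modulus_smoothness TYPE('a) t + \<bar>s - t\<bar>"
      using modulus_smoothness_ge[OF x y, of t] by argo
  qed
  show "dist (modulus_smoothness TYPE('a) s) (modulus_smoothness TYPE('a) t) \<le> 1 * dist s t"
    for s t
    using le[of s t] le[of t s] by (simp add: dist_real_def abs_le_iff abs_minus_commute)
qed simp

lemma modulus_smoothness_inv:
  assumes "\<exists>u::'a::real_normed_vector. u \<noteq> 0" and "0 < c"
  shows modulus_smoothness_inv_nonneg: "0 \<le> modulus_smoothness_inv TYPE('a) c"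
    and modulus_smoothness_inv_eq: "modulus_smoothness TYPE('a) (modulus_smoothness_inv TYPE('a) c) = c"
proof -
  let ?\<rho> = "modulus_smoothness TYPE('a)"
  have "?\<rho> 0 \<le> c" "c \<le> ?\<rho> (c + 1)"
    using modulus_smoothness_0[OF assms(1)] abs_minus_one_le_modulus_smoothness[OF assms(1), of "c + 1"]
      assms(2) by simp_all
  moreover have "continuous_on {0..c + 1} ?\<rho>"
    using modulus_smoothness_lipschitz[OF assms(1)] by (rule lipschitz_on_continuous_on)
  ultimately obtain s where s: "0 \<le> s" "?\<rho> s = c"
    using IVT'[of ?\<rho> 0 c "c + 1"] assms(2) by auto
  have uniq: "s' = s" if "0 \<le> s'" "?\<rho> s' = c" for s'
  proof (rule ccontr)
    assume "s' \<noteq> s"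
    then consider "s' < s" | "s < s'" by linarith
    then show False
    proof cases
      case 1
      have "?\<rho> s' < ?\<rho> s"
        by (rule modulus_smoothness_less[OF assms(1) that(1) 1]) (simp add: s assms(2))
      with s that show False by simp
    next
      case 2
      have "?\<rho> s < ?\<rho> s'"
        by (rule modulus_smoothness_less[OF assms(1) s(1) 2]) (simp add: that assms(2))
      with s that show False by simp
    qed
  qed
  have "modulus_smoothness_inv TYPE('a) c = s"
    unfolding modulus_smoothness_inv_def by (rule the_equality) (simp_all add: s uniq)
  with s show "0 \<le> modulus_smoothness_inv TYPE('a) c" "?\<rho> (modulus_smoothness_inv TYPE('a) c) = c"
    by simp_all
qed

lemma modulus_smoothness_inv_bounds:
  assumes "\<exists>u::'a::real_normed_vector. u \<noteq> 0" and "0 < c"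
  shows "0 < modulus_smoothness_inv TYPE('a) c" and "modulus_smoothness_inv TYPE('a) c \<le> 1 + c"
proof -
  let ?\<tau> = "modulus_smoothness_inv TYPE('a) c"
  have "?\<tau> \<noteq> 0"
  proof
    assume "?\<tau> = 0"
    then show False
      using modulus_smoothness_inv_eq[OF assms] modulus_smoothness_0[OF assms(1)] assms(2) by simp
  qed
  then show "0 < ?\<tau>"
    using modulus_smoothness_inv_nonneg[OF assms] by simp
  show "?\<tau> \<le> 1 + c"
    using abs_minus_one_le_modulus_smoothness[OF assms(1), of ?\<tau>]
    unfolding modulus_smoothness_inv_eq[OF assms] by simp
qed

lemma norm_add_plus_norm_diff_le:
  fixes u v :: "'a::real_normed_vector"
  assumes "u \<noteq> 0"
  shows "norm (u + v) + norm (u - v) \<le> 2 * norm u * (1 + modulus_smoothness TYPE('a) (norm v / norm u))"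
proof (cases "v = 0")
  case True
  have "\<exists>w::'a. w \<noteq> 0" using assms by blast
  with True show ?thesis by (simp add: modulus_smoothness_0)
next
  case False
  let ?t = "norm v / norm u"
  have "u + v = norm u *\<^sub>R (sgn u + ?t *\<^sub>R sgn v)" "u - v = norm u *\<^sub>R (sgn u - ?t *\<^sub>R sgn v)"
    using assms False by (simp_all add: sgn_div_norm algebra_simps)
  then have "norm (u + v) = norm u * norm (sgn u + ?t *\<^sub>R sgn v)"
    and "norm (u - v) = norm u * norm (sgn u - ?t *\<^sub>R sgn v)"
    by (metis norm_scaleR abs_norm_cancel)+
  then have "norm (u + v) + norm (u - v)
      = 2 * norm u * ((norm (sgn u + ?t *\<^sub>R sgn v) + norm (sgn u - ?t *\<^sub>R sgn v)) / 2)"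
    by (simp add: algebra_simps)
  also have "\<dots> \<le> 2 * norm u * (1 + modulus_smoothness TYPE('a) ?t)"
  proof (rule mult_left_mono)
    show "(norm (sgn u + ?t *\<^sub>R sgn v) + norm (sgn u - ?t *\<^sub>R sgn v)) / 2
        \<le> 1 + modulus_smoothness TYPE('a) ?t"
      using modulus_smoothness_ge[of "sgn u" "sgn v" ?t] assms False by (simp add: norm_sgn) argo
  qed simp
  finally show ?thesis .
qed

lemma norm_diff_le_diameter_convex_hull:
  fixes S :: "'a::real_normed_vector set"
  assumes "bounded S" "y \<in> S" "a \<in> convex hull S"
  shows "norm (y - a) \<le> diameter S"
proof -
  have "S \<subseteq> cball y (diameter S)"
    using diameter_bounded_bound[OF assms(1,2)] by (auto simp: subset_eq)
  then have "convex hull S \<subseteq> cball y (diameter S)"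
    by (intro hull_minimal convex_cball)
  then show ?thesis
    using assms(3) by (auto simp: dist_norm)
qed

lemma convex_combination_exists_le:
  fixes f w :: "'b \<Rightarrow> real"
  assumes "finite T" "\<forall>z\<in>T. 0 \<le> w z" "sum w T = 1"
  shows "\<exists>z\<in>T. f z \<le> (\<Sum>z\<in>T. w z * f z)"
proof -
  have "T \<noteq> {}" using assms(3) by auto
  then have "Min (f ` T) \<in> f ` T" using assms(1) by simp
  then obtain z where z: "z \<in> T" "f z = Min (f ` T)" by auto
  have "f z = (\<Sum>y\<in>T. w y * f z)" using assms(3) by (simp add: sum_distrib_right[symmetric])
  also have "\<dots> \<le> (\<Sum>y\<in>T. w y * f y)"
    using assms(1,2) z(2) by (intro sum_mono mult_left_mono) auto
  finally show ?thesis using z(1) by blast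
qed

lemma convex_hull_smoothness_step:
  fixes S :: "'a::real_normed_vector set"
  assumes "a \<in> convex hull S" "r \<noteq> 0" "\<And>y. y \<in> S \<Longrightarrow> norm (y - a) \<le> D"
  shows "\<exists>s\<in>S. norm (r + (s - a)) \<le> norm r * (1 + 2 * modulus_smoothness TYPE('a) (D / norm r))"
proof -
  obtain T w where T: "finite T" "T \<subseteq> S" "\<forall>y\<in>T. 0 \<le> w y" "sum w T = 1" "(\<Sum>y\<in>T. w y *\<^sub>R y) = a"
    using assms(1) unfolding convex_hull_explicit by blast
  let ?R = "modulus_smoothness TYPE('a) (D / norm r)"
  let ?C = "2 * norm r * (1 + ?R)"
  \<comment> \<open>The terms \<open>\<parallel>r - (y - a)\<parallel>\<close> average to at least \<open>\<parallel>r\<parallel>\<close>, because their arguments average to \<open>r\<close>.\<close>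
  have "(\<Sum>y\<in>T. w y *\<^sub>R (r - (y - a))) = (sum w T) *\<^sub>R (r + a) - (\<Sum>y\<in>T. w y *\<^sub>R y)"
    by (simp add: algebra_simps scaleR_sum_left sum_subtractf sum.distrib)
  also have "\<dots> = r" using T(4,5) by simp
  finally have "norm r \<le> (\<Sum>y\<in>T. norm (w y *\<^sub>R (r - (y - a))))"
    by (metis norm_sum)
  also have "\<dots> = (\<Sum>y\<in>T. w y * norm (r - (y - a)))"
    using T(3) by (intro sum.cong) auto
  finally have lower: "norm r \<le> (\<Sum>y\<in>T. w y * norm (r - (y - a)))" .
  have pointwise: "norm (r + (y - a)) \<le> ?C - norm (r - (y - a))" if "y \<in> T" for y
  proof -
    have "norm (y - a) / norm r \<le> D / norm r"
      using assms(3)[of y] that T(2) by (intro divide_right_mono) auto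
    then have "modulus_smoothness TYPE('a) (norm (y - a) / norm r) \<le> ?R"
      using assms(2) by (intro modulus_smoothness_mono) auto
    with norm_add_plus_norm_diff_le[OF assms(2), of "y - a"] show ?thesis
      by (smt (verit) mult_left_mono norm_ge_zero)
  qed
  have "(\<Sum>y\<in>T. w y * norm (r + (y - a))) \<le> (\<Sum>y\<in>T. w y * (?C - norm (r - (y - a))))"
    using T(3) pointwise by (intro sum_mono mult_left_mono) auto
  also have "\<dots> = ?C - (\<Sum>y\<in>T. w y * norm (r - (y - a)))"
    using T(4) by (simp add: right_diff_distrib sum_subtractf sum_distrib_right[symmetric])
  also have "\<dots> \<le> norm r * (1 + 2 * ?R)"
    using lower by (simp add: algebra_simps)
  finally show ?thesis
    using convex_combination_exists_le[OF T(1,3,4), of "\<lambda>y. norm (r + (y - a))"] T(2)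
    by (meson order_trans subsetD)
qed

lemma exists_seq_partial_sums_rec:
  fixes g :: "'b::comm_monoid_add \<Rightarrow> 'a" and f :: "'a \<Rightarrow> 'b"
  shows "\<exists>x. \<forall>m. x (Suc m) = g (\<Sum>i=1..m. f (x i))"
proof -
  define s where "s = rec_nat 0 (\<lambda>_ s. s + f (g s))"
  define x where "x i = g (s (i - 1))" for i
  have "(\<Sum>i=1..m. f (x i)) = s m" for m
    by (induction m) (simp_all add: s_def x_def)
  then have "\<forall>m. x (Suc m) = g (\<Sum>i=1..m. f (x i))"
    by (simp add: x_def)
  then show ?thesis by blast
qed

lemma greedy_sequence:
  fixes S :: "'a::real_normed_vector set"
  assumes "a \<in> convex hull S" "S \<noteq> {}" "\<And>y. y \<in> S \<Longrightarrow> norm (y - a) \<le> D"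
  obtains x :: "nat \<Rightarrow> 'a"
  where "\<And>m. x (Suc m) \<in> S"
    and "\<And>m. norm (\<Sum>i=1..Suc m. x i - a) \<le> norm (\<Sum>i=1..m. x i - a) + D"
    and "\<And>m. (\<Sum>i=1..m. x i - a) \<noteq> 0 \<Longrightarrow>
           norm (\<Sum>i=1..Suc m. x i - a) \<le> norm (\<Sum>i=1..m. x i - a) *
             (1 + 2 * modulus_smoothness TYPE('a) (D / norm (\<Sum>i=1..m. x i - a)))"
proof -
  let ?good = "\<lambda>r s. s \<in> S \<and> (r \<noteq> 0 \<longrightarrow>
                 norm (r + (s - a)) \<le> norm r * (1 + 2 * modulus_smoothness TYPE('a) (D / norm r)))"
  have "\<exists>s. ?good r s" for r
  proof (cases "r = 0")
    case True
    then show ?thesis using assms(2) by auto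
  next
    case False
    then show ?thesis using convex_hull_smoothness_step[OF assms(1) False assms(3)] by auto
  qed
  then have step: "?good r (SOME s. ?good r s)" for r
    by (rule someI_ex)
  obtain x where x: "\<And>m. x (Suc m) = (SOME s. ?good (\<Sum>i=1..m. x i - a) s)"
    using exists_seq_partial_sums_rec[of "\<lambda>r. SOME s. ?good r s" "\<lambda>y. y - a"] by blast
  show thesis
  proof (rule that)
    fix m
    show "x (Suc m) \<in> S" using step x by simp
    have sum_Suc: "(\<Sum>i=1..Suc m. x i - a) = (\<Sum>i=1..m. x i - a) + (x (Suc m) - a)"
      by simp
    show "norm (\<Sum>i=1..Suc m. x i - a) \<le> norm (\<Sum>i=1..m. x i - a) + D"
      unfolding sum_Suc using norm_triangle_ineq assms(3) \<open>x (Suc m) \<in> S\<close>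
      by (smt (verit))
    show "norm (\<Sum>i=1..Suc m. x i - a) \<le> norm (\<Sum>i=1..m. x i - a) *
             (1 + 2 * modulus_smoothness TYPE('a) (D / norm (\<Sum>i=1..m. x i - a)))"
      if "(\<Sum>i=1..m. x i - a) \<noteq> 0"
      unfolding sum_Suc using step[of "\<Sum>i=1..m. x i - a"] x[of m] that by simp
  qed
qed

lemma threshold_geometric_bound:
  fixes n :: "nat \<Rightarrow> real"
  assumes "n 0 = 0" "\<And>m. n (Suc m) \<le> n m + D" "\<And>m. L \<le> n m \<Longrightarrow> n (Suc m) \<le> q * n m"
    and "0 \<le> L" "0 \<le> D" "1 \<le> q"
  shows "n (Suc m) \<le> (L + D) * q ^ m"
proof (induction m)
  case 0
  then show ?case using assms(1,4) assms(2)[of 0] by simp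
next
  case (Suc m)
  show ?case
  proof (cases "L \<le> n (Suc m)")
    case True
    then have "n (Suc (Suc m)) \<le> q * n (Suc m)" by (rule assms(3))
    also have "\<dots> \<le> q * ((L + D) * q ^ m)"
      using Suc.IH assms(6) by (intro mult_left_mono) auto
    finally show ?thesis by (simp add: mult_ac)
  next
    case False
    then have "n (Suc (Suc m)) \<le> (L + D) * 1" using assms(2)[of "Suc m"] by simp
    also have "\<dots> \<le> (L + D) * q ^ Suc m"
      using assms(4-6) by (intro mult_left_mono one_le_power) auto
    finally show ?thesis .
  qed
qed

lemma smoothness_residual_bound:
  fixes r :: "nat \<Rightarrow> 'a::real_normed_vector"
  assumes "\<exists>u::'a. u \<noteq> 0" "r 0 = 0" "0 < D" "0 < k"
    and "\<And>m. norm (r (Suc m)) \<le> norm (r m) + D"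
    and "\<And>m. r m \<noteq> 0 \<Longrightarrow>
           norm (r (Suc m)) \<le> norm (r m) * (1 + 2 * modulus_smoothness TYPE('a) (D / norm (r m)))"
  shows "norm (r k) \<le> 2 * exp 2 * D / modulus_smoothness_inv TYPE('a) (1 / real k)"
proof -
  define \<tau> where "\<tau> = modulus_smoothness_inv TYPE('a) (1 / real k)"
  define q where "q = 1 + 2 / real k"
  have inv_k_pos: "0 < 1 / real k" using assms(4) by simp
  have \<tau>: "0 < \<tau>" "\<tau> \<le> 1 + 1 / real k" "modulus_smoothness TYPE('a) \<tau> = 1 / real k"
    unfolding \<tau>_def using modulus_smoothness_inv_bounds[OF assms(1) inv_k_pos]
      modulus_smoothness_inv_eq[OF assms(1) inv_k_pos]
    by auto
  have geometric: "norm (r (Suc m)) \<le> q * norm (r m)" if "D / \<tau> \<le> norm (r m)" for m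
  proof -
    have pos: "0 < norm (r m)" using that assms(3) \<tau>(1) by (smt (verit) divide_pos_pos)
    then have "D / norm (r m) \<le> \<tau>" using that \<tau>(1) by (simp add: field_simps)
    then have "modulus_smoothness TYPE('a) (D / norm (r m)) \<le> 1 / real k"
      using modulus_smoothness_mono[OF assms(1), of "D / norm (r m)" \<tau>] \<tau>(3) assms(3) pos by simp
    then have factor: "1 + 2 * modulus_smoothness TYPE('a) (D / norm (r m)) \<le> q" by (simp add: q_def)
    have "norm (r (Suc m)) \<le> norm (r m) * (1 + 2 * modulus_smoothness TYPE('a) (D / norm (r m)))"
      using assms(6) pos by simp
    also have "\<dots> \<le> norm (r m) * q"
      using factor by (rule mult_left_mono) simp
    finally show ?thesis by (simp add: mult.commute)
  qed
  obtain j where j: "k = Suc j" using assms(4) gr0_implies_Suc by blast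
  have q: "1 \<le> q" by (simp add: q_def)
  have threshold: "D / \<tau> + D \<le> 2 * (D / \<tau>) * q"
  proof -
    have "1 / real k \<le> 4 / real k" using assms(4) by (simp add: divide_right_mono)
    then have "1 + \<tau> \<le> 2 * q" using \<tau>(2) by (simp add: q_def)
    have "D / \<tau> + D = (D / \<tau>) * (1 + \<tau>)" using \<tau>(1) by (simp add: field_simps)
    also have "\<dots> \<le> (D / \<tau>) * (2 * q)"
      using \<open>1 + \<tau> \<le> 2 * q\<close> by (rule mult_left_mono) (use assms(3) \<tau>(1) in simp)
    finally show ?thesis by (simp add: mult_ac)
  qed
  have "norm (r k) \<le> (D / \<tau> + D) * q ^ j"
    unfolding j using assms(2,3,5) \<tau>(1) geometric q
    by (intro threshold_geometric_bound[where n="\<lambda>m. norm (r m)"]) auto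
  also have "\<dots> \<le> 2 * (D / \<tau>) * q * q ^ j"
    using threshold q by (intro mult_right_mono) auto
  also have "\<dots> = 2 * (D / \<tau>) * q ^ k"
    unfolding j by simp
  also have "\<dots> \<le> 2 * (D / \<tau>) * exp 2"
    using exp_ge_one_plus_x_over_n_power_n[of k 2] assms(3,4) \<tau>(1)
    by (intro mult_left_mono) (auto simp: q_def)
  finally show ?thesis by (simp add: \<tau>_def field_simps)
qed

lemma greedy_mean_approximation:
  fixes S :: "'a::real_normed_vector set"
  assumes "\<exists>u::'a. u \<noteq> 0" "a \<in> convex hull S" "S \<noteq> {}"
    and "\<And>y. y \<in> S \<Longrightarrow> norm (y - a) \<le> D" "0 < D"
  obtains x :: "nat \<Rightarrow> 'a"
  where "\<And>i. 1 \<le> i \<Longrightarrow> x i \<in> S"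
    and "\<And>k. 1 \<le> k \<Longrightarrow> norm (a - (1 / real k) *\<^sub>R (\<Sum>i=1..k. x i))
           \<le> 2 * exp 2 / (real k * modulus_smoothness_inv TYPE('a) (1 / real k)) * D"
proof -
  obtain x where x: "\<And>m. x (Suc m) \<in> S"
    and add: "\<And>m. norm (\<Sum>i=1..Suc m. x i - a) \<le> norm (\<Sum>i=1..m. x i - a) + D"
    and mult: "\<And>m. (\<Sum>i=1..m. x i - a) \<noteq> 0 \<Longrightarrow>
         norm (\<Sum>i=1..Suc m. x i - a) \<le> norm (\<Sum>i=1..m. x i - a) *
           (1 + 2 * modulus_smoothness TYPE('a) (D / norm (\<Sum>i=1..m. x i - a)))"
    using greedy_sequence[OF assms(2-4)] by blast
  show thesis
  proof (rule that)
    show "x i \<in> S" if "1 \<le> i" for i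
      using x[of "i - 1"] that by simp
    fix k :: nat assume k: "1 \<le> k"
    have "a - (1 / real k) *\<^sub>R (\<Sum>i=1..k. x i) = - ((1 / real k) *\<^sub>R (\<Sum>i=1..k. x i - a))"
      using k by (simp add: sum_subtractf scaleR_diff_right sum_constant_scaleR)
    then have "norm (a - (1 / real k) *\<^sub>R (\<Sum>i=1..k. x i)) = norm (\<Sum>i=1..k. x i - a) / real k"
      by simp
    also have "\<dots> \<le> (2 * exp 2 * D / modulus_smoothness_inv TYPE('a) (1 / real k)) / real k"
      using smoothness_residual_bound[of "\<lambda>m. \<Sum>i=1..m. x i - a", OF assms(1) _ assms(5) _ add mult] k
      by (intro divide_right_mono) auto
    finally show "norm (a - (1 / real k) *\<^sub>R (\<Sum>i=1..k. x i))
        \<le> 2 * exp 2 / (real k * modulus_smoothness_inv TYPE('a) (1 / real k)) * D"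
      by (simp add: mult_ac)
  qed
qed

text \<open>The estimate holds in every nontrivial normed space; uniform smoothness is what makes its
  right-hand side tend to \<open>0\<close>.\<close>

theorem theorem1:
  fixes S :: "'a::banach set" and a :: 'a
  assumes "uniformly_smooth TYPE('a)"
    and "S \<noteq> {}" and "bounded S"
    and "a \<in> convex hull S"
  shows "\<exists>x :: nat \<Rightarrow> 'a. (\<forall>i\<ge>1. x i \<in> S) \<and>
           (\<forall>k::nat\<ge>1. norm (a - (1 / real k) *\<^sub>R (\<Sum>i=1..k. x i))
               \<le> 2 * exp 2 / (real k * modulus_smoothness_inv TYPE('a) (1 / real k)) * diameter S)"
proof -
  have near: "norm (y - a) \<le> diameter S" if "y \<in> S" for y
    using norm_diff_le_diameter_convex_hull[OF assms(3) that assms(4)] .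
  show ?thesis
  proof (cases "diameter S = 0")
    case True
    with near assms(2) have "a \<in> S" by fastforce
    with True show ?thesis
      by (intro exI[of _ "\<lambda>_. a"]) (auto simp: sum_constant_scaleR)
  next
    case False
    then have "0 < diameter S" using diameter_ge_0[OF assms(3)] by simp
    from False have "S \<noteq> {a}" by auto
    then obtain y where "y \<in> S" "y - a \<noteq> 0" using assms(2) by auto
    then have "\<exists>u::'a. u \<noteq> 0" by blast
    from greedy_mean_approximation[OF this assms(4,2) near \<open>0 < diameter S\<close>] show ?thesis
      by metis
  qed
qed

end
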